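(* Let $X$ be a regular, $\omega_1$-expandable, Baire $\sigma$-space. Then $dis(X)\geq\Delta(X)$.
   Context: All spaces are Hausdorff. $dis(X)$ is the least number of discrete subspaces needed to cover $X$; $\Delta(X)$ is the least cardinality of a non-empty open subset of $X$. A $\sigma$-space is a space having a $\sigma$-discrete network (a network being a family $\mathcal{N}$ of subsets such that for every open $U$ and $x\in U$ there is $N\in\mathcal{N}$ with $x\in N\subseteq U$). For a collection $\mathcal{G}$ of subsets, $ord(x,\mathcal{G})=|\{G\in\mathcal{G}:x\in G\}|$. $X$ is $\omega_1$-expandable if for every closed discrete set $D\subseteq X$ there is a family $\mathcal{G}=\{U_d: d\in D\}$ of open sets with $U_d\cap D=\{d\}$ for each $d\in D$ and $ord(x,\mathcal{G})\leq\omega_1$ for every $x\in X$. *)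

theory Defs
  imports "HOL-Analysis.Analysis"
begin

definition Baire_space :: "'a topology \<Rightarrow> bool" where
  "Baire_space X \<longleftrightarrow>
     (\<forall>G :: nat \<Rightarrow> 'a set.
        (\<forall>n. openin X (G n) \<and> X closure_of (G n) = topspace X)
        \<longrightarrow> X closure_of (\<Inter>n. G n) = topspace X)"

definition discrete_subspace :: "'a topology \<Rightarrow> 'a set \<Rightarrow> bool" where
  "discrete_subspace X D \<longleftrightarrow> D \<subseteq> topspace X \<and>
     (\<forall>d\<in>D. \<exists>U. openin X U \<and> U \<inter> D = {d})"

definition discrete_family :: "'a topology \<Rightarrow> 'a set set \<Rightarrow> bool" where
  "discrete_family X \<A> \<longleftrightarrow>
     (\<forall>x\<in>topspace X. \<exists>V. openin X V \<and> x \<in> V \<and>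
        (\<forall>A\<in>\<A>. \<forall>B\<in>\<A>. A \<inter> V \<noteq> {} \<and> B \<inter> V \<noteq> {} \<longrightarrow> A = B))"

definition network :: "'a topology \<Rightarrow> 'a set set \<Rightarrow> bool" where
  "network X \<N> \<longleftrightarrow> (\<forall>N\<in>\<N>. N \<subseteq> topspace X) \<and>
     (\<forall>U x. openin X U \<and> x \<in> U \<longrightarrow> (\<exists>N\<in>\<N>. x \<in> N \<and> N \<subseteq> U))"

definition sigma_space :: "'a topology \<Rightarrow> bool" where
  "sigma_space X \<longleftrightarrow>
     (\<exists>\<N> :: nat \<Rightarrow> 'a set set. (\<forall>n. discrete_family X (\<N> n)) \<and> network X (\<Union>n. \<N> n))"

text \<open>omega_1-expandable. The cardinal omega_1 is cardSuc natLeq.\<close>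
definition omega1_expandable :: "'a topology \<Rightarrow> bool" where
  "omega1_expandable X \<longleftrightarrow>
     (\<forall>D. closedin X D \<and> discrete_subspace X D \<longrightarrow>
        (\<exists>U :: 'a \<Rightarrow> 'a set. (\<forall>d\<in>D. openin X (U d) \<and> U d \<inter> D = {d}) \<and>
           (\<forall>x\<in>topspace X. ordLeq3 (card_of {G. G \<in> U ` D \<and> x \<in> G}) (cardSuc natLeq))))"

end

theory Submission
  imports Defs
begin

text \<open>
  Using a sigma-discrete network, every discrete subspace of a T1 sigma-space is a countable
  union of closed discrete sets, so X is covered by a family \<E> of closed discrete sets indexed
  by \<D> \<times> \<nat>.  If \<D> is countable, then so is \<E>, and the Baire property yields a member of
  \<E> whose closure, i.e. the member itself, has nonempty interior; since the member is
  discrete this produces an isolated point of X.  If \<D> is uncountable, then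
  omega_1 \<le> |\<D>| and omega_1-expandability of the members of \<E> gives a neighbourhood
  assignment y \<mapsto> N y in which every point lies in at most |\<D>| of the sets N y.  A second
  Baire argument, applied to the partition of X according to the level of the network
  element chosen below each N y, gives a nonempty open V with a dense subset S all of whose
  neighbourhoods N s contain a common point; counting then shows |V| \<le> |\<D>|.
\<close>

lemma Baire_countable_cover:
  assumes Baire: "Baire_space X" and nonempty: "topspace X \<noteq> {}"
    and countable: "countable \<C>" and cover: "topspace X \<subseteq> \<Union>\<C>"
  shows "\<exists>C\<in>\<C>. \<exists>W. openin X W \<and> W \<noteq> {} \<and> W \<subseteq> X closure_of C"
proof (rule ccontr)
  assume nowhere_dense: "\<not> ?thesis"
  have "\<C> \<noteq> {}" using nonempty cover by blast
  define G where "G n = topspace X - X closure_of (from_nat_into \<C> n)" for n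
  have open_dense: "openin X (G n) \<and> X closure_of (G n) = topspace X" for n
  proof
    show "openin X (G n)" unfolding G_def by (intro openin_diff openin_topspace closedin_closure_of)
    have "from_nat_into \<C> n \<in> \<C>" using \<open>\<C> \<noteq> {}\<close> by (rule from_nat_into)
    then have "X interior_of (X closure_of from_nat_into \<C> n) = {}"
      using nowhere_dense openin_interior_of[of X] interior_of_subset[of X] by meson
    then show "X closure_of (G n) = topspace X"
      unfolding G_def closure_of_complement by simp
  qed
  have dense: "X closure_of (\<Inter>n. G n) = topspace X"
    using Baire open_dense unfolding Baire_space_def by presburger
  have "(\<Inter>n. G n) \<noteq> {}"
  proof
    assume "(\<Inter>n. G n) = {}"
    then show False using dense nonempty by simp
  qed
  then obtain x where x: "x \<in> (\<Inter>n. G n)" by blast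
  then have "x \<in> topspace X" unfolding G_def by blast
  then obtain C where "C \<in> \<C>" "x \<in> C" using cover by blast
  moreover obtain n where "from_nat_into \<C> n = C"
    using from_nat_into_surj[OF countable \<open>C \<in> \<C>\<close>] by blast
  ultimately have "x \<in> X closure_of (from_nat_into \<C> n)"
    using \<open>x \<in> topspace X\<close> closure_of_subset_Int[of X C] by auto
  moreover have "x \<in> G n" using x by blast
  ultimately show False unfolding G_def by blast
qed

lemma closed_discrete_if_locally_at_most_one:
  assumes T1: "t1_space X" and sub: "A \<subseteq> topspace X"
    and local: "\<And>x. x \<in> topspace X \<Longrightarrow>
                  \<exists>V. openin X V \<and> x \<in> V \<and> (\<forall>a\<in>A \<inter> V. \<forall>b\<in>A \<inter> V. a = b)"
  shows "closedin X A \<and> discrete_subspace X A"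
proof
  have "openin X (topspace X - A)"
  proof (subst openin_subopen, intro ballI)
    fix x assume x: "x \<in> topspace X - A"
    then obtain V where V: "openin X V" "x \<in> V" "\<forall>a\<in>A \<inter> V. \<forall>b\<in>A \<inter> V. a = b"
      using local by blast
    (* V meets A in at most one point e \<noteq> x, which T1 lets us remove *)
    have "openin X (V - (A \<inter> V))"
    proof (cases "A \<inter> V = {}")
      case False
      then obtain e where e: "A \<inter> V = {e}" using V(3) by blast
      then have "closedin X {e}"
        using T1 sub unfolding t1_space_closedin_singleton by blast
      then show ?thesis using V(1) e by (simp add: openin_diff)
    qed (simp add: V(1))
    moreover have "V - (A \<inter> V) \<subseteq> topspace X - A" using openin_subset[OF V(1)] by blast
    ultimately show "\<exists>T. openin X T \<and> x \<in> T \<and> T \<subseteq> topspace X - A"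
      using x V(2) by blast
  qed
  then show "closedin X A" using sub unfolding closedin_def by blast
  show "discrete_subspace X A"
    unfolding discrete_subspace_def
  proof (intro conjI ballI sub)
    fix d assume "d \<in> A"
    then have "d \<in> topspace X" using sub by blast
    then obtain V where "openin X V" "d \<in> V" "\<forall>a\<in>A \<inter> V. \<forall>b\<in>A \<inter> V. a = b"
      using local by blast
    then have "openin X V \<and> V \<inter> A = {d}" using \<open>d \<in> A\<close> by blast
    then show "\<exists>U. openin X U \<and> U \<inter> A = {d}" by blast
  qed
qed

lemma discrete_familyE:
  assumes "discrete_family X \<A>" and "x \<in> topspace X"
  obtains V where "openin X V" "x \<in> V"
    "\<forall>A\<in>\<A>. \<forall>B\<in>\<A>. A \<inter> V \<noteq> {} \<and> B \<inter> V \<noteq> {} \<longrightarrow> A = B"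
  using assms unfolding discrete_family_def by meson

text \<open>In a T1 sigma-space every discrete subspace D is a countable union of closed discrete
  sets: sort the points d \<in> D by the level of a network element lying between d and an open
  set isolating d.  Two points of one level near x would share that network element.\<close>
lemma discrete_subspace_sigma_closed_discrete:
  assumes T1: "t1_space X" and sigma: "sigma_space X" and D: "discrete_subspace X D"
  shows "\<exists>E :: nat \<Rightarrow> 'a set. (\<Union>n. E n) = D \<and> (\<forall>n. closedin X (E n) \<and> discrete_subspace X (E n))"
proof -
  obtain \<N> :: "nat \<Rightarrow> 'a set set" where fam: "\<And>n. discrete_family X (\<N> n)"
    and net: "network X (\<Union>n. \<N> n)"
    using sigma unfolding sigma_space_def by blast
  obtain W where W: "\<And>d. d \<in> D \<Longrightarrow> openin X (W d) \<and> W d \<inter> D = {d}"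
    using D unfolding discrete_subspace_def by metis
  have "\<exists>n M. M \<in> \<N> n \<and> d \<in> M \<and> M \<subseteq> W d" if "d \<in> D" for d
    using net W[OF that] unfolding network_def by blast
  then obtain level M where M: "\<And>d. d \<in> D \<Longrightarrow> M d \<in> \<N> (level d) \<and> d \<in> M d \<and> M d \<subseteq> W d"
    by metis
  define E where "E n = {d\<in>D. level d = n}" for n
  have "closedin X (E n) \<and> discrete_subspace X (E n)" for n
  proof (rule closed_discrete_if_locally_at_most_one[OF T1])
    show "E n \<subseteq> topspace X" using D unfolding E_def discrete_subspace_def by auto
    fix x assume "x \<in> topspace X"
    then obtain V where V: "openin X V" "x \<in> V"
      "\<forall>A\<in>\<N> n. \<forall>B\<in>\<N> n. A \<inter> V \<noteq> {} \<and> B \<inter> V \<noteq> {} \<longrightarrow> A = B"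
      by (rule discrete_familyE[OF fam])
    have "a = b" if "a \<in> E n \<inter> V" "b \<in> E n \<inter> V" for a b
    proof -
      have "a \<in> D" "b \<in> D" "level a = n" "level b = n" using that unfolding E_def by auto
      then have "M a \<in> \<N> n" "M b \<in> \<N> n" "M a \<inter> V \<noteq> {}" "M b \<inter> V \<noteq> {}"
        using M[OF \<open>a \<in> D\<close>] M[OF \<open>b \<in> D\<close>] that by auto
      then have "M a = M b" using V(3) by blast
      then have "b \<in> W a \<inter> D" using M \<open>a \<in> D\<close> \<open>b \<in> D\<close> by blast
      then show "a = b" using W[OF \<open>a \<in> D\<close>] by auto
    qed
    then show "\<exists>V. openin X V \<and> x \<in> V \<and> (\<forall>a\<in>E n \<inter> V. \<forall>b\<in>E n \<inter> V. a = b)"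
      using V(1,2) by blast
  qed
  moreover have "(\<Union>n. E n) = D" unfolding E_def by blast
  ultimately show ?thesis by blast
qed

lemma closed_discrete_refinement:
  assumes T1: "t1_space X" and sigma: "sigma_space X"
    and cover: "\<Union>\<D> = topspace X" and discrete: "\<forall>D\<in>\<D>. discrete_subspace X D"
  shows "\<exists>E :: 'a set \<times> nat \<Rightarrow> 'a set. \<Union>(E ` (\<D> \<times> UNIV)) = topspace X \<and>
           (\<forall>C\<in>E ` (\<D> \<times> UNIV). closedin X C \<and> discrete_subspace X C)"
proof -
  obtain E :: "'a set \<Rightarrow> nat \<Rightarrow> 'a set" where
    E: "\<And>D. D \<in> \<D> \<Longrightarrow> (\<Union>n. E D n) = D \<and> (\<forall>n. closedin X (E D n) \<and> discrete_subspace X (E D n))"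
    using discrete_subspace_sigma_closed_discrete[OF T1 sigma] discrete by metis
  have "\<Union>((\<lambda>(D, n). E D n) ` (\<D> \<times> UNIV)) = (\<Union>D\<in>\<D>. \<Union>n. E D n)" by auto
  also have "\<dots> = topspace X" using E cover by auto
  finally show ?thesis using E by (intro exI[of _ "\<lambda>(D, n). E D n"]) auto
qed

lemma isolated_point_if_countable_closed_discrete_cover:
  assumes Baire: "Baire_space X" and nonempty: "topspace X \<noteq> {}"
    and countable: "countable \<E>" and cover: "\<Union>\<E> = topspace X"
    and closed_discrete: "\<forall>E\<in>\<E>. closedin X E \<and> discrete_subspace X E"
  shows "\<exists>x. openin X {x}"
proof -
  obtain E W where E: "E \<in> \<E>" and W: "openin X W" "W \<noteq> {}" "W \<subseteq> X closure_of E"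
    using Baire_countable_cover[OF Baire nonempty countable] cover by blast
  have "closedin X E" "discrete_subspace X E" using closed_discrete E by auto
  then have "W \<subseteq> E" using W(3) closure_of_closedin[of X E] by simp
  obtain w where "w \<in> W" using W(2) by blast
  then obtain Q where "openin X Q" "Q \<inter> E = {w}"
    using \<open>discrete_subspace X E\<close> \<open>W \<subseteq> E\<close> unfolding discrete_subspace_def by blast
  then have "openin X (W \<inter> Q)" "W \<inter> Q = {w}"
    using W(1) \<open>W \<subseteq> E\<close> \<open>w \<in> W\<close> by auto
  then show ?thesis by auto
qed

text \<open>Given a neighbourhood assignment N in a
  Baire sigma-space, choose below each N y a network element containing y and split X by the
  level of that element.  Some level T k is dense in a nonempty open set, which we shrink to V
  meeting at most one network element of level k; then S = T k \<inter> V is dense in V and all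
  neighbourhoods N s (s \<in> S) contain one common point y0 \<in> S.\<close>
lemma Baire_sigma_common_point:
  assumes Baire: "Baire_space X" and nonempty: "topspace X \<noteq> {}" and sigma: "sigma_space X"
    and nbhd: "\<And>y. y \<in> topspace X \<Longrightarrow> openin X (N y) \<and> y \<in> N y"
  obtains V S y0 where "openin X V" "V \<noteq> {}" "S \<subseteq> V" "y0 \<in> S" "\<And>s. s \<in> S \<Longrightarrow> y0 \<in> N s"
    and "\<And>Q p. openin X Q \<Longrightarrow> p \<in> Q \<inter> V \<Longrightarrow> Q \<inter> S \<noteq> {}"
proof -
  obtain \<N> :: "nat \<Rightarrow> 'a set set" where fam: "\<And>n. discrete_family X (\<N> n)"
    and net: "network X (\<Union>n. \<N> n)"
    using sigma unfolding sigma_space_def by blast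
  have "\<exists>k M. M \<in> \<N> k \<and> y \<in> M \<and> M \<subseteq> N y" if "y \<in> topspace X" for y
    using net nbhd[OF that] unfolding network_def by blast
  then obtain level M where M:
    "\<And>y. y \<in> topspace X \<Longrightarrow> M y \<in> \<N> (level y) \<and> y \<in> M y \<and> M y \<subseteq> N y"
    by metis
  define T where "T k = {y \<in> topspace X. level y = k}" for k
  have "countable (range T)" by simp
  moreover have "topspace X \<subseteq> \<Union>(range T)" unfolding T_def by blast
  ultimately have "\<exists>C\<in>range T. \<exists>W. openin X W \<and> W \<noteq> {} \<and> W \<subseteq> X closure_of C"
    by (rule Baire_countable_cover[OF Baire nonempty])
  then obtain k W where W: "openin X W" "W \<noteq> {}" "W \<subseteq> X closure_of T k" by blast
  then obtain z where z: "z \<in> W" "z \<in> topspace X" using openin_subset by blast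
  obtain V0 where V0: "openin X V0" "z \<in> V0"
    "\<forall>A\<in>\<N> k. \<forall>B\<in>\<N> k. A \<inter> V0 \<noteq> {} \<and> B \<inter> V0 \<noteq> {} \<longrightarrow> A = B"
    by (rule discrete_familyE[OF fam z(2)])
  define V where "V = W \<inter> V0"
  define S where "S = T k \<inter> V"
  have V: "openin X V" "z \<in> V" unfolding V_def using W(1) V0(1,2) z(1) by auto
  have dense: "Q \<inter> S \<noteq> {}" if Q: "openin X Q" "p \<in> Q \<inter> V" for Q p
  proof -
    have "p \<in> X closure_of T k" using Q(2) W(3) unfolding V_def by blast
    moreover have "openin X (Q \<inter> V)" using Q(1) V(1) by (rule openin_Int)
    ultimately have "\<exists>y. y \<in> T k \<and> y \<in> Q \<inter> V" using Q(2) unfolding in_closure_of by blast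
    then show ?thesis unfolding S_def by blast
  qed
  obtain y0 where y0: "y0 \<in> S" using dense[OF V(1)] V(2) by blast
  have y0_level: "y0 \<in> topspace X" "level y0 = k" "y0 \<in> V0"
    using y0 unfolding S_def T_def V_def by auto
  have common: "y0 \<in> N s" if s: "s \<in> S" for s
  proof -
    have s_level: "s \<in> topspace X" "level s = k" "s \<in> V0"
      using s unfolding S_def T_def V_def by auto
    have "M s \<in> \<N> k" "M y0 \<in> \<N> k" "M s \<inter> V0 \<noteq> {}" "M y0 \<inter> V0 \<noteq> {}"
      using M[OF s_level(1)] M[OF y0_level(1)] s_level y0_level by auto
    then have "M s = M y0" using V0(3) by blast
    then show ?thesis using M[OF s_level(1)] M[OF y0_level(1)] by auto
  qed
  have "S \<subseteq> V" "V \<noteq> {}" using V(2) unfolding S_def by auto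
  then show thesis using that V(1) y0 common dense by blast
qed

text \<open>If in a nonempty Baire sigma-space every point lies in at most |K| members of some
  neighbourhood assignment (K infinite), then some nonempty open set has at most |K| points:
  in the previous lemma S lies in the star of y0, and V is covered by the stars of the points
  of S, because each N v with v \<in> V meets S.\<close>
lemma small_open_set_if_small_stars:
  assumes Baire: "Baire_space X" and nonempty: "topspace X \<noteq> {}" and sigma: "sigma_space X"
    and K: "infinite K"
    and nbhd: "\<And>y. y \<in> topspace X \<Longrightarrow> openin X (N y) \<and> y \<in> N y"
    and small: "\<And>x. x \<in> topspace X \<Longrightarrow> ordLeq3 (card_of {y \<in> topspace X. x \<in> N y}) (card_of K)"
  shows "\<exists>V. openin X V \<and> V \<noteq> {} \<and> ordLeq3 (card_of V) (card_of K)"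
proof -
  obtain V S y0 where V: "openin X V" "V \<noteq> {}" and S: "S \<subseteq> V" "y0 \<in> S" "\<And>s. s \<in> S \<Longrightarrow> y0 \<in> N s"
    and dense: "\<And>Q p. openin X Q \<Longrightarrow> p \<in> Q \<inter> V \<Longrightarrow> Q \<inter> S \<noteq> {}"
    using Baire_sigma_common_point[OF Baire nonempty sigma nbhd] by blast
  have SX: "S \<subseteq> topspace X" using S(1) openin_subset[OF V(1)] by blast
  have "S \<subseteq> {y \<in> topspace X. y0 \<in> N y}" using S(3) SX by blast
  then have S_small: "ordLeq3 (card_of S) (card_of K)"
    using ordLeq_transitive[OF card_of_mono1 small] S(2) SX by blast
  have "V \<subseteq> (\<Union>s\<in>S. {y \<in> topspace X. s \<in> N y})"
  proof
    fix v assume "v \<in> V"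
    then have "v \<in> topspace X" using openin_subset[OF V(1)] by blast
    then have "N v \<inter> S \<noteq> {}" using dense[of "N v" v] nbhd \<open>v \<in> V\<close> by blast
    then show "v \<in> (\<Union>s\<in>S. {y \<in> topspace X. s \<in> N y})" using \<open>v \<in> topspace X\<close> by blast
  qed
  have stars_small: "\<forall>s\<in>S. ordLeq3 (card_of {y \<in> topspace X. s \<in> N y}) (card_of K)"
    using SX small by blast
  have "ordLeq3 (card_of (\<Union>s\<in>S. {y \<in> topspace X. s \<in> N y})) (card_of K)"
    by (rule card_of_UNION_ordLeq_infinite[OF K S_small stars_small])
  with \<open>V \<subseteq> (\<Union>s\<in>S. {y \<in> topspace X. s \<in> N y})\<close> have "ordLeq3 (card_of V) (card_of K)"
    by (rule ordLeq_transitive[OF card_of_mono1])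
  then show ?thesis using V by blast
qed

lemma omega1_le_card_if_uncountable:
  assumes "\<not> countable A"
  shows "ordLeq3 (cardSuc natLeq) (card_of A)"
proof -
  have "\<not> ordLeq3 (card_of A) (card_of (UNIV :: nat set))"
    using assms unfolding card_of_ordLeq[symmetric] countable_def by blast
  then have "\<not> ordLeq3 (card_of A) natLeq"
    using ordLeq_ordIso_trans[OF _ ordIso_symmetric[OF card_of_nat]] by blast
  then have "ordLess2 natLeq (card_of A)"
    using not_ordLeq_iff_ordLess[OF natLeq_Well_order card_of_Well_order] by blast
  then show ?thesis using cardSuc_ordLess_ordLeq[OF natLeq_Card_order card_of_Card_order] by blast
qed

lemma card_of_image_Times_nat:
  assumes "infinite A"
  shows "ordLeq3 (card_of (f ` (A \<times> (UNIV :: nat set)))) (card_of A)"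
proof -
  have "ordIso2 (card_of (A \<times> (UNIV :: nat set))) (card_of A)"
    using assms by (intro card_of_Times_infinite_simps(1)) (simp_all add: infinite_iff_card_of_nat)
  then show ?thesis by (rule ordLeq_ordIso_trans[OF card_of_image])
qed

text \<open>Each point y takes its expansion neighbourhood from a member of \<E> containing it; the star
  of x then lies in the union over E \<in> \<E> of the points d \<in> E whose expansion contains x,
  and those are at most omega_1 many because expansions of distinct points differ.\<close>
lemma expandable_small_stars:
  assumes expandable: "omega1_expandable X" and cover: "\<Union>\<E> = topspace X"
    and closed_discrete: "\<forall>E\<in>\<E>. closedin X E \<and> discrete_subspace X E"
    and K: "infinite K" and few: "ordLeq3 (card_of \<E>) (card_of K)"
    and omega1: "ordLeq3 (cardSuc natLeq) (card_of K)"
  obtains N where "\<And>y. y \<in> topspace X \<Longrightarrow> openin X (N y) \<and> y \<in> N y"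
    and "\<And>x. x \<in> topspace X \<Longrightarrow> ordLeq3 (card_of {y \<in> topspace X. x \<in> N y}) (card_of K)"
proof -
  have "\<forall>E\<in>\<E>. \<exists>U :: 'a \<Rightarrow> 'a set. (\<forall>d\<in>E. openin X (U d) \<and> U d \<inter> E = {d}) \<and>
          (\<forall>x\<in>topspace X. ordLeq3 (card_of {G. G \<in> U ` E \<and> x \<in> G}) (cardSuc natLeq))"
    using expandable closed_discrete unfolding omega1_expandable_def by blast
  then have "\<exists>U. \<forall>E\<in>\<E>. (\<forall>d\<in>E. openin X (U E d) \<and> U E d \<inter> E = {d}) \<and>
          (\<forall>x\<in>topspace X. ordLeq3 (card_of {G. G \<in> U E ` E \<and> x \<in> G}) (cardSuc natLeq))"
    by (rule bchoice)
  then obtain U :: "'a set \<Rightarrow> 'a \<Rightarrow> 'a set" where U: "\<forall>E\<in>\<E>.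
      (\<forall>d\<in>E. openin X (U E d) \<and> U E d \<inter> E = {d}) \<and>
      (\<forall>x\<in>topspace X. ordLeq3 (card_of {G. G \<in> U E ` E \<and> x \<in> G}) (cardSuc natLeq))"
    by blast
  have isolates: "openin X (U E d) \<and> U E d \<inter> E = {d}" if "E \<in> \<E>" "d \<in> E" for E d
    using U that by blast
  have order: "ordLeq3 (card_of {G. G \<in> U E ` E \<and> x \<in> G}) (cardSuc natLeq)"
    if "E \<in> \<E>" "x \<in> topspace X" for E x
    using U that by blast
  have "\<forall>y\<in>topspace X. \<exists>E. E \<in> \<E> \<and> y \<in> E" using cover by blast
  then have "\<exists>home. \<forall>y\<in>topspace X. home y \<in> \<E> \<and> y \<in> home y" by (rule bchoice)
  then obtain home where home: "\<forall>y\<in>topspace X. home y \<in> \<E> \<and> y \<in> home y" by blast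
  define N where "N y = U (home y) y" for y
  have "openin X (N y) \<and> y \<in> N y" if "y \<in> topspace X" for y
  proof -
    have "home y \<in> \<E>" "y \<in> home y" using home that by auto
    then show ?thesis using isolates unfolding N_def by blast
  qed
  moreover have "ordLeq3 (card_of {y \<in> topspace X. x \<in> N y}) (card_of K)"
    if x: "x \<in> topspace X" for x
  proof -
    have "ordLeq3 (card_of {d \<in> E. x \<in> U E d}) (card_of K)" if E: "E \<in> \<E>" for E
    proof -
      have "inj_on (U E) {d \<in> E. x \<in> U E d}"
      proof (rule inj_onI)
        fix a b assume "a \<in> {d \<in> E. x \<in> U E d}" "b \<in> {d \<in> E. x \<in> U E d}"
          and same: "U E a = U E b"
        then have "a \<in> E" "b \<in> E" by simp_all
        then have "a \<in> U E b \<inter> E" using isolates[OF E \<open>a \<in> E\<close>] same by blast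
        then show "a = b" using isolates[OF E \<open>b \<in> E\<close>] by simp
      qed
      then have "ordLeq3 (card_of {d \<in> E. x \<in> U E d}) (card_of {G. G \<in> U E ` E \<and> x \<in> G})"
        by (rule card_of_ordLeqI) blast
      moreover have "ordLeq3 (card_of {G. G \<in> U E ` E \<and> x \<in> G}) (cardSuc natLeq)"
        by (rule order[OF E x])
      ultimately have "ordLeq3 (card_of {d \<in> E. x \<in> U E d}) (cardSuc natLeq)"
        by (rule ordLeq_transitive)
      then show ?thesis using omega1 by (rule ordLeq_transitive)
    qed
    then have "ordLeq3 (card_of (\<Union>E\<in>\<E>. {d \<in> E. x \<in> U E d})) (card_of K)"
      by (intro card_of_UNION_ordLeq_infinite[OF K few] ballI)
    moreover have "{y \<in> topspace X. x \<in> N y} \<subseteq> (\<Union>E\<in>\<E>. {d \<in> E. x \<in> U E d})"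
      using home unfolding N_def by fastforce
    ultimately show ?thesis using ordLeq_transitive[OF card_of_mono1] by blast
  qed
  ultimately show thesis by (rule that)
qed

theorem theorem2:
  fixes X :: "'a topology"
  assumes "topspace X \<noteq> {}"
    and "Hausdorff_space X"
    and "regular_space X"
    and "omega1_expandable X"
    and "Baire_space X"
    and "sigma_space X"
  shows "\<forall>\<D> :: 'a set set. (\<Union>\<D> = topspace X \<and> (\<forall>D\<in>\<D>. discrete_subspace X D))
           \<longrightarrow> (\<exists>U. openin X U \<and> U \<noteq> {} \<and> ordLeq3 (card_of U) (card_of \<D>))"
proof (intro allI impI)
  fix \<D> :: "'a set set"
  assume \<D>: "\<Union>\<D> = topspace X \<and> (\<forall>D\<in>\<D>. discrete_subspace X D)"
  obtain E :: "'a set \<times> nat \<Rightarrow> 'a set" where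
    cover: "\<Union>(E ` (\<D> \<times> UNIV)) = topspace X" and
    closed_discrete: "\<forall>C\<in>E ` (\<D> \<times> UNIV). closedin X C \<and> discrete_subspace X C"
    using closed_discrete_refinement[OF Hausdorff_imp_t1_space[OF assms(2)] assms(6)
        conjunct1[OF \<D>] conjunct2[OF \<D>]] by blast
  have "\<D> \<noteq> {}" using cover assms(1) by blast
  show "\<exists>U. openin X U \<and> U \<noteq> {} \<and> ordLeq3 (card_of U) (card_of \<D>)"
  proof (cases "countable \<D>")
    case True
    then have "countable (E ` (\<D> \<times> UNIV))" by simp
    then have "\<exists>x. openin X {x}"
      by (rule isolated_point_if_countable_closed_discrete_cover[OF assms(5,1) _ cover closed_discrete])
    then obtain x where "openin X {x}" by blast
    moreover have "ordLeq3 (card_of {x}) (card_of \<D>)" by (rule card_of_singl_ordLeq[OF \<open>\<D> \<noteq> {}\<close>])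
    ultimately show ?thesis by blast
  next
    case False
    then have "infinite \<D>" using countable_finite by blast
    then have "ordLeq3 (card_of (E ` (\<D> \<times> UNIV))) (card_of \<D>)"
      by (rule card_of_image_Times_nat)
    then obtain N where "\<And>y. y \<in> topspace X \<Longrightarrow> openin X (N y) \<and> y \<in> N y"
      and "\<And>x. x \<in> topspace X \<Longrightarrow> ordLeq3 (card_of {y \<in> topspace X. x \<in> N y}) (card_of \<D>)"
      using expandable_small_stars[OF assms(4) cover closed_discrete \<open>infinite \<D>\<close> _
          omega1_le_card_if_uncountable[OF False]] by blast
    then show ?thesis by (rule small_open_set_if_small_stars[OF assms(5,1,6) \<open>infinite \<D>\<close>])
  qed
qed

end
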